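(* Let $G$ be a group with a finite generating set $S$ not containing the identity, and let $d_W$ and $d_C$ be the word metric and the cardinal metric on $G$ with respect to $S$. (1) If $(G,d_W)$ has infinite diameter, then $(G,d_W)$ and $(G,d_C)$ are not bi-Lipschitz equivalent. (2) If $(G,d_W)$ has finite diameter, then $(G,d_W)$ and $(G,d_C)$ are bi-Lipschitz equivalent, and therefore they are quasi-isometric.
   Context: The word metric: $d_W(g,g)=0$ and for $g\ne h$, $d_W(g,h)$ is the least $n\in\mathbb{N}$ such that $g^{-1}h=s_1^{\epsilon_1}\cdots s_n^{\epsilon_n}$ with $s_i\in S$, $\epsilon_i\in\{\pm1\}$. The cardinal norm is $\|g\| = \min\{|A| : A\subseteq S,\ g\in\langle A\rangle\}$, where $\langle A\rangle$ is the subgroup generated by $A$, and $d_C(g,h)=\|g^{-1}h\|$. *)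

theory Defs
  imports "HOL-Algebra.Algebra"
begin

definition word_norm :: "('a, 'b) monoid_scheme \<Rightarrow> 'a set \<Rightarrow> 'a \<Rightarrow> nat" where
  "word_norm G S x = (LEAST n. \<exists>l. length l = n \<and> set l \<subseteq> S \<union> (m_inv G ` S)
      \<and> x = foldr (\<lambda>a b. a \<otimes>\<^bsub>G\<^esub> b) l \<one>\<^bsub>G\<^esub>)"

definition word_dist :: "('a, 'b) monoid_scheme \<Rightarrow> 'a set \<Rightarrow> 'a \<Rightarrow> 'a \<Rightarrow> nat" where
  "word_dist G S g h = word_norm G S (inv\<^bsub>G\<^esub> g \<otimes>\<^bsub>G\<^esub> h)"

definition cardinal_norm :: "('a, 'b) monoid_scheme \<Rightarrow> 'a set \<Rightarrow> 'a \<Rightarrow> nat" where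
  "cardinal_norm G S x = (LEAST n. \<exists>A. A \<subseteq> S \<and> card A = n \<and> x \<in> generate G A)"

definition cardinal_dist :: "('a, 'b) monoid_scheme \<Rightarrow> 'a set \<Rightarrow> 'a \<Rightarrow> 'a \<Rightarrow> nat" where
  "cardinal_dist G S g h = cardinal_norm G S (inv\<^bsub>G\<^esub> g \<otimes>\<^bsub>G\<^esub> h)"

definition finite_diameter :: "'a set \<Rightarrow> ('a \<Rightarrow> 'a \<Rightarrow> real) \<Rightarrow> bool" where
  "finite_diameter M1 dist0 = (\<exists>B. \<forall>x\<in>M1. \<forall>y\<in>M1. dist0 x y \<le> B)"

definition bilipschitz_equiv ::
  "'a set \<Rightarrow> ('a \<Rightarrow> 'a \<Rightarrow> real) \<Rightarrow> 'b set \<Rightarrow> ('b \<Rightarrow> 'b \<Rightarrow> real) \<Rightarrow> bool" where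
  "bilipschitz_equiv M1 d1 M2 d2 = (\<exists>f K. bij_betw f M1 M2 \<and> K \<ge> 1 \<and>
     (\<forall>x\<in>M1. \<forall>y\<in>M1. d1 x y / K \<le> d2 (f x) (f y) \<and> d2 (f x) (f y) \<le> K * d1 x y))"

definition quasi_isometric ::
  "'a set \<Rightarrow> ('a \<Rightarrow> 'a \<Rightarrow> real) \<Rightarrow> 'b set \<Rightarrow> ('b \<Rightarrow> 'b \<Rightarrow> real) \<Rightarrow> bool" where
  "quasi_isometric M1 d1 M2 d2 = (\<exists>f K C. f ` M1 \<subseteq> M2 \<and> K \<ge> 1 \<and> C \<ge> 0 \<and>
     (\<forall>x\<in>M1. \<forall>y\<in>M1. d1 x y / K - C \<le> d2 (f x) (f y) \<and> d2 (f x) (f y) \<le> K * d1 x y + C) \<and>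
     (\<forall>y\<in>M2. \<exists>x\<in>M1. d2 y (f x) \<le> C))"

end

theory Submission
  imports Defs
begin

text \<open>Every element lies in the subgroup generated by all of S, so the cardinal norm is at most
  card S and the cardinal metric always has finite diameter. Bi-Lipschitz equivalence preserves
  finite diameter, which rules it out when the word metric is unbounded. When both metrics are
  bounded, the identity is bi-Lipschitz because both are natural-valued and vanish only on the
  diagonal.\<close>

lemma bilipschitz_equiv_finite_diameter:
  assumes "bilipschitz_equiv M1 d1 M2 d2" and "finite_diameter M2 d2"
  shows "finite_diameter M1 d1"
proof -
  obtain f K where f: "bij_betw f M1 M2" "K \<ge> 1"
    and lower: "\<forall>x\<in>M1. \<forall>y\<in>M1. d1 x y / K \<le> d2 (f x) (f y)"
    using assms(1) unfolding bilipschitz_equiv_def by blast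
  obtain B where B: "\<forall>x\<in>M2. \<forall>y\<in>M2. d2 x y \<le> B"
    using assms(2) unfolding finite_diameter_def by blast
  have "d1 x y \<le> K * B" if "x \<in> M1" "y \<in> M1" for x y
  proof -
    have "d1 x y / K \<le> B"
      using lower B bij_betwE[OF f(1)] that by (meson order_trans)
    then show ?thesis using f(2) by (simp add: divide_le_eq mult.commute)
  qed
  then show ?thesis unfolding finite_diameter_def by blast
qed

lemma bilipschitz_equiv_imp_quasi_isometric:
  assumes "bilipschitz_equiv M1 d1 M2 d2" and "\<And>y. y \<in> M2 \<Longrightarrow> d2 y y = 0"
  shows "quasi_isometric M1 d1 M2 d2"
proof -
  obtain f K where f: "bij_betw f M1 M2" "K \<ge> 1"
    and bounds: "\<forall>x\<in>M1. \<forall>y\<in>M1. d1 x y / K \<le> d2 (f x) (f y) \<and> d2 (f x) (f y) \<le> K * d1 x y"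
    using assms(1) unfolding bilipschitz_equiv_def by blast
  have coarsely_onto: "\<exists>x\<in>M1. d2 y (f x) \<le> 0" if y: "y \<in> M2" for y
  proof -
    obtain x where "x \<in> M1" "y = f x" using y f(1) unfolding bij_betw_def by blast
    then show ?thesis using assms(2)[OF y] by (intro bexI[of _ x]) auto
  qed
  show ?thesis
    unfolding quasi_isometric_def
    by (rule exI[of _ f], rule exI[of _ K], rule exI[of _ "0::real"])
       (use f bounds coarsely_onto in \<open>auto simp: bij_betw_def\<close>)
qed

lemma bilipschitz_equiv_id_if_bounded_nat_valued:
  fixes d1 d2 :: "'a \<Rightarrow> 'a \<Rightarrow> nat"
  assumes zero1: "\<And>x y. x \<in> M \<Longrightarrow> y \<in> M \<Longrightarrow> d1 x y = 0 \<longleftrightarrow> x = y"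
    and zero2: "\<And>x y. x \<in> M \<Longrightarrow> y \<in> M \<Longrightarrow> d2 x y = 0 \<longleftrightarrow> x = y"
    and bounded1: "finite_diameter M (\<lambda>x y. real (d1 x y))"
    and bounded2: "finite_diameter M (\<lambda>x y. real (d2 x y))"
  shows "bilipschitz_equiv M (\<lambda>x y. real (d1 x y)) M (\<lambda>x y. real (d2 x y))"
proof -
  obtain B1 B2 where B1: "\<forall>x\<in>M. \<forall>y\<in>M. real (d1 x y) \<le> B1"
    and B2: "\<forall>x\<in>M. \<forall>y\<in>M. real (d2 x y) \<le> B2"
    using bounded1 bounded2 unfolding finite_diameter_def by blast
  define K where "K = max 1 (max B1 B2)"
  have K: "K \<ge> 1" "K \<ge> B1" "K \<ge> B2" unfolding K_def by auto
  have "real (d1 x y) / K \<le> real (d2 x y) \<and> real (d2 x y) \<le> K * real (d1 x y)"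
    if xy: "x \<in> M" "y \<in> M" for x y
  proof (cases "x = y")
    case True
    then have "d1 x y = 0" "d2 x y = 0" using zero1 zero2 xy by auto
    then show ?thesis by simp
  next
    case False
    then have pos: "d1 x y \<ge> 1" "d2 x y \<ge> 1" using zero1 zero2 xy by (auto simp: Suc_le_eq)
    have "real (d1 x y) \<le> B1" using B1 xy by blast
    then have "real (d1 x y) / K \<le> 1" using K by (simp add: divide_le_eq)
    moreover have "real (d2 x y) \<le> K * real (d1 x y)"
    proof -
      have "real (d2 x y) \<le> B2" using B2 xy by blast
      also have "\<dots> \<le> K" using K by simp
      also have "\<dots> \<le> K * real (d1 x y)" using K pos by simp
      finally show ?thesis .
    qed
    ultimately show ?thesis using pos by simp
  qed
  then show ?thesis
    unfolding bilipschitz_equiv_def by (intro exI[of _ id] exI[of _ K]) (use K in auto)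
qed

lemma (in monoid) multlist_append:
  assumes "set xs \<subseteq> carrier G" and "set ys \<subseteq> carrier G"
  shows "foldr (\<otimes>) (xs @ ys) \<one> = foldr (\<otimes>) xs \<one> \<otimes> foldr (\<otimes>) ys \<one>"
  using assms by (induction xs) (auto simp: m_assoc)

lemma (in group) generate_imp_multlist:
  assumes "S \<subseteq> carrier G" and "x \<in> generate G S"
  shows "\<exists>l. set l \<subseteq> S \<union> m_inv G ` S \<and> x = foldr (\<otimes>) l \<one>"
  using assms(2)
proof (induction rule: generate.induct)
  case one
  show ?case by (intro exI[of _ "[]"]) simp
next
  case (incl h)
  then show ?case using assms(1) by (intro exI[of _ "[h]"]) auto
next
  case (inv h)
  then show ?case using assms(1) by (intro exI[of _ "[inv h]"]) auto
next
  case (eng h1 h2)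
  then obtain l1 l2 where "set l1 \<subseteq> S \<union> m_inv G ` S" "h1 = foldr (\<otimes>) l1 \<one>"
    and "set l2 \<subseteq> S \<union> m_inv G ` S" "h2 = foldr (\<otimes>) l2 \<one>" by blast
  moreover have "set l1 \<subseteq> carrier G" "set l2 \<subseteq> carrier G"
    using calculation assms(1) by auto
  ultimately show ?case by (intro exI[of _ "l1 @ l2"]) (auto simp del: foldr_append simp add: multlist_append)
qed

lemma (in group) word_norm_eq_0_iff:
  assumes "S \<subseteq> carrier G" and "x \<in> generate G S"
  shows "word_norm G S x = 0 \<longleftrightarrow> x = \<one>"
proof
  assume "x = \<one>"
  then show "word_norm G S x = 0"
    unfolding word_norm_def by (intro Least_eq_0 exI[of _ "[]"]) simp
next
  assume norm: "word_norm G S x = 0"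
  obtain l where l: "set l \<subseteq> S \<union> m_inv G ` S \<and> x = foldr (\<otimes>) l \<one>"
    using generate_imp_multlist[OF assms] by blast
  have "\<exists>l. length l = word_norm G S x \<and> set l \<subseteq> S \<union> m_inv G ` S \<and> x = foldr (\<otimes>) l \<one>"
    unfolding word_norm_def by (rule LeastI[of _ "length l"]) (use l in blast)
  then show "x = \<one>" using norm by simp
qed

lemma cardinal_norm_le_card:
  assumes "x \<in> generate G S"
  shows "cardinal_norm G S x \<le> card S"
  unfolding cardinal_norm_def by (rule Least_le) (use assms in blast)

lemma (in group) cardinal_norm_eq_0_iff:
  assumes "finite S" and "x \<in> generate G S"
  shows "cardinal_norm G S x = 0 \<longleftrightarrow> x = \<one>"
proof
  assume "x = \<one>"
  then show "cardinal_norm G S x = 0"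
    unfolding cardinal_norm_def by (intro Least_eq_0 exI[of _ "{}"]) (simp add: generate.one)
next
  assume norm: "cardinal_norm G S x = 0"
  have "\<exists>A. A \<subseteq> S \<and> card A = cardinal_norm G S x \<and> x \<in> generate G A"
    unfolding cardinal_norm_def by (rule LeastI[of _ "card S"]) (use assms(2) in blast)
  then obtain A where "A \<subseteq> S" "card A = 0" "x \<in> generate G A" using norm by auto
  then have "A = {}" using assms(1) by (metis card_0_eq finite_subset)
  then show "x = \<one>" using \<open>x \<in> generate G A\<close> generate_empty by simp
qed

lemma (in group) inv_mult_eq_one_iff:
  assumes "g \<in> carrier G" and "h \<in> carrier G"
  shows "inv g \<otimes> h = \<one> \<longleftrightarrow> g = h"
  using assms by (metis inv_equality l_inv r_inv inv_closed)

theorem mainTheorem7: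
  fixes G (structure) and S :: "'a set"
  assumes "group G" and "finite S" and "S \<subseteq> carrier G" and "\<one> \<notin> S"
    and "generate G S = carrier G"
  shows "(\<not> finite_diameter (carrier G) (\<lambda>g h. real (word_dist G S g h)) \<longrightarrow>
           \<not> bilipschitz_equiv (carrier G) (\<lambda>g h. real (word_dist G S g h))
                                (carrier G) (\<lambda>g h. real (cardinal_dist G S g h)))
       \<and> (finite_diameter (carrier G) (\<lambda>g h. real (word_dist G S g h)) \<longrightarrow>
           bilipschitz_equiv (carrier G) (\<lambda>g h. real (word_dist G S g h))
                             (carrier G) (\<lambda>g h. real (cardinal_dist G S g h))
         \<and> quasi_isometric (carrier G) (\<lambda>g h. real (word_dist G S g h))
                           (carrier G) (\<lambda>g h. real (cardinal_dist G S g h)))"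
proof -
  interpret group G by fact
  let ?word = "\<lambda>g h. real (word_dist G S g h)"
  let ?cardinal = "\<lambda>g h. real (cardinal_dist G S g h)"
  have word_dist_eq_0: "word_dist G S g h = 0 \<longleftrightarrow> g = h"
    and cardinal_dist_eq_0: "cardinal_dist G S g h = 0 \<longleftrightarrow> g = h"
    if "g \<in> carrier G" "h \<in> carrier G" for g h
    using that assms(2,3,5) word_norm_eq_0_iff cardinal_norm_eq_0_iff inv_mult_eq_one_iff
    by (simp_all add: word_dist_def cardinal_dist_def)
  have "real (cardinal_dist G S g h) \<le> card S" if "g \<in> carrier G" "h \<in> carrier G" for g h
  proof -
    have "inv g \<otimes> h \<in> generate G S" using that assms(5) by simp
    then show ?thesis using cardinal_norm_le_card by (simp add: cardinal_dist_def)
  qed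
  then have bounded_cardinal: "finite_diameter (carrier G) ?cardinal"
    unfolding finite_diameter_def by blast
  have cardinal_dist_self: "?cardinal g g = 0" if "g \<in> carrier G" for g
    using cardinal_dist_eq_0 that by simp
  have "finite_diameter (carrier G) ?word \<Longrightarrow> bilipschitz_equiv (carrier G) ?word (carrier G) ?cardinal"
    using bilipschitz_equiv_id_if_bounded_nat_valued[OF word_dist_eq_0 cardinal_dist_eq_0 _ bounded_cardinal] .
  moreover have "bilipschitz_equiv (carrier G) ?word (carrier G) ?cardinal
      \<Longrightarrow> quasi_isometric (carrier G) ?word (carrier G) ?cardinal"
    using bilipschitz_equiv_imp_quasi_isometric cardinal_dist_self by blast
  moreover have "bilipschitz_equiv (carrier G) ?word (carrier G) ?cardinal
      \<Longrightarrow> finite_diameter (carrier G) ?word"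
    using bilipschitz_equiv_finite_diameter bounded_cardinal by blast
  ultimately show ?thesis by blast
qed

end
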